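(* If $n\ge 8$ and $S=\{x_1,\dots,x_n\}$ is an $(n-7)$-fold GCD closed set of distinct positive integers, then the LCM matrix $[S]$ is nonsingular.
   Context: Let $T$ be a set of $n$ distinct positive integers and $r\in[1,n-1]$ an integer. $T$ is $r$-fold GCD closed if there is a divisor chain $R\subseteq T$ (a set totally ordered by divisibility) with $|R|=r$ such that $\max(R)$ divides $\min(T\setminus R)$ and $T\setminus R$ is GCD closed (i.e. $\gcd(x,y)\in T\setminus R$ for all $x,y\in T\setminus R$). The LCM matrix $[S]$ has $(i,j)$ entry $\mathrm{lcm}(x_i,x_j)$. *)

theory Defs
  imports Main "Jordan_Normal_Form.Determinant"
begin

definition gcd_closed :: "nat set \<Rightarrow> bool" where
  "gcd_closed A \<longleftrightarrow> (\<forall>x\<in>A. \<forall>y\<in>A. gcd x y \<in> A)"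

definition divisor_chain :: "nat set \<Rightarrow> bool" where
  "divisor_chain R \<longleftrightarrow> (\<forall>x\<in>R. \<forall>y\<in>R. x dvd y \<or> y dvd x)"

definition r_fold_gcd_closed :: "nat \<Rightarrow> nat set \<Rightarrow> bool" where
  "r_fold_gcd_closed r T \<longleftrightarrow>
     1 \<le> r \<and> r \<le> card T - 1 \<and>
     (\<exists>R. R \<subseteq> T \<and> divisor_chain R \<and> card R = r \<and>
          Max R dvd Min (T - R) \<and> gcd_closed (T - R))"

definition lcm_matrix :: "nat list \<Rightarrow> int mat" where
  "lcm_matrix xs = mat (length xs) (length xs) (\<lambda>(i, j). int (lcm (xs ! i) (xs ! j)))"

end

theory Submission
  imports Defs
begin

(* Let g be the arithmetic function with \<Sum>{g d | d dvd n} = 1/n, so that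
   1/gcd(x,y) = \<Sum>{g d | d dvd x, d dvd y}. A kernel vector v of [S] gives the equations
   \<Sum>{c y / gcd(x,y) | y \<in> S} = 0 for x \<in> S, with c y = y * v_y. When S is GCD closed, grouping
   the divisors d of x by the least element of S that d divides turns this system into a
   triangular one whose diagonal coefficients are
     \<alpha>(z) = \<Sum>{g d | d dvd z, d divides no proper divisor of z in S},
   so [S] is nonsingular once every \<alpha>(z) is nonzero.

   An (n-7)-fold GCD closed set S = R \<union> S' is GCD closed, since every element of the chain R
   divides Min S', which divides all of the GCD closed set S'. For z \<in> R and z = Min S' the
   proper divisors of z in S lie in the chain R, and \<alpha>(z) = 1/z - 1/e < 0 for the largest
   of them, e. For the other z \<in> S', \<alpha>(z) only depends on the GCD closed set M of the at
   most six proper divisors of z in S', indeed only on the maximal elements of M. One maximal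
   element again gives \<alpha>(z) < 0. With two or more, the bound |M| \<le> 6 leaves so few
   non-maximal elements that the maximal ones can be listed so that each is incomparable with
   the later ones and its gcds with them form a chain; peeling them off one at a time by
   inclusion-exclusion then shows \<alpha>(z) \<ge> 1/z. *)

(* The function g above, i.e. the Dirichlet convolution of the Moebius function with 1/n. *)
function moebius_recip :: "nat \<Rightarrow> rat" where
  "moebius_recip n =
     (if n = 0 then 0 else 1 / of_nat n - (\<Sum>d\<in>{d. d dvd n \<and> d < n}. moebius_recip d))"
  by auto
termination by (relation "measure id") auto

declare moebius_recip.simps [simp del]

lemma sum_divisors_moebius_recip:
  assumes "n > 0"
  shows "(\<Sum>d\<in>{d. d dvd n}. moebius_recip d) = 1 / of_nat n"
proof -
  have "{d. d dvd n} = insert n {d. d dvd n \<and> d < n}"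
    using assms by (auto dest: dvd_imp_le)
  moreover have "finite {d. d dvd n \<and> d < n}"
    by auto
  ultimately show ?thesis
    using assms by (simp add: moebius_recip.simps[of n])
qed

definition avoiding_divisors :: "nat \<Rightarrow> nat set \<Rightarrow> nat set" where
  "avoiding_divisors z M = {d. d dvd z \<and> (\<forall>m\<in>M. \<not> d dvd m)}"

(* avoid_sum z (proper_divisors_in S z) is the coefficient \<alpha>(z) above. *)
definition avoid_sum :: "nat \<Rightarrow> nat set \<Rightarrow> rat" where
  "avoid_sum z M = (\<Sum>d\<in>avoiding_divisors z M. moebius_recip d)"

lemma finite_avoiding_divisors: "z > 0 \<Longrightarrow> finite (avoiding_divisors z M)"
  unfolding avoiding_divisors_def by (auto intro: finite_subset[of _ "{d. d dvd z}"])

lemma avoid_sum_empty: "z > 0 \<Longrightarrow> avoid_sum z {} = 1 / of_nat z"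
  unfolding avoid_sum_def avoiding_divisors_def by (simp add: sum_divisors_moebius_recip)

lemma avoid_sum_insert:
  assumes "z > 0" "x dvd z"
  shows "avoid_sum z (insert x M) = avoid_sum z M - avoid_sum x (gcd x ` M)"
proof -
  have "x > 0"
    using assms by (auto intro: Nat.gr0I)
  have split: "avoiding_divisors z M =
      avoiding_divisors z (insert x M) \<union> avoiding_divisors x (gcd x ` M)"
    using assms(2) by (auto simp: avoiding_divisors_def intro: dvd_trans)
  have "avoid_sum z M = avoid_sum z (insert x M) + avoid_sum x (gcd x ` M)"
    unfolding avoid_sum_def split
    by (rule sum.union_disjoint)
      (use assms \<open>x > 0\<close> in \<open>auto simp: finite_avoiding_divisors avoiding_divisors_def\<close>)
  then show ?thesis
    by simp
qed

lemma avoid_sum_cong: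
  assumes "\<And>d. d dvd z \<Longrightarrow> (\<exists>m\<in>M. d dvd m) \<longleftrightarrow> (\<exists>m\<in>M'. d dvd m)"
  shows "avoid_sum z M = avoid_sum z M'"
  unfolding avoid_sum_def avoiding_divisors_def using assms by (metis (no_types, lifting))

lemma avoid_sum_greatest:
  assumes "z > 0" "e dvd z" "e \<in> M" "\<And>m. m \<in> M \<Longrightarrow> m dvd e"
  shows "avoid_sum z M = 1 / of_nat z - 1 / of_nat e"
proof -
  have "e > 0"
    using assms(1,2) by (auto intro: Nat.gr0I)
  have "avoid_sum z M = avoid_sum z {e}"
    by (rule avoid_sum_cong) (use assms(3,4) in \<open>auto intro: dvd_trans\<close>)
  also have "\<dots> = avoid_sum z {} - avoid_sum e {}"
    using avoid_sum_insert[OF assms(1,2), of "{}"] by simp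
  finally show ?thesis
    using assms(1) \<open>e > 0\<close> by (simp add: avoid_sum_empty)
qed

lemma avoid_sum_greatest_neg:
  assumes "z > 0" "e dvd z" "e \<noteq> z" "e \<in> M" "\<And>m. m \<in> M \<Longrightarrow> m dvd e"
  shows "avoid_sum z M < 0"
proof -
  have "0 < e" "e < z"
    using assms(1-3) by (auto intro: Nat.gr0I dest: dvd_imp_le)
  then have "1 / of_nat z < (1 / of_nat e :: rat)"
    by (simp add: frac_less2)
  then show ?thesis
    using avoid_sum_greatest[OF assms(1,2,4,5)] by simp
qed

lemma divisor_chain_dvd_Max:
  assumes "finite C" "divisor_chain C" "0 \<notin> C" "c \<in> C"
  shows "c dvd Max C"
proof -
  have "Max C \<in> C" "c \<le> Max C"
    using assms(1,4) by (auto intro: Max_in)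
  moreover from this assms(2,4) have "c dvd Max C \<or> Max C dvd c"
    unfolding divisor_chain_def by blast
  ultimately show ?thesis
    using assms(3,4) by (metis dvd_imp_le le_antisym neq0_conv)
qed

lemma avoid_sum_divisor_chain:
  assumes "x > 0" "finite C" "C \<noteq> {}" "divisor_chain C" "0 \<notin> C" "\<forall>c\<in>C. c dvd x"
  shows "avoid_sum x C = 1 / of_nat x - 1 / of_nat (Max C)"
  using assms by (intro avoid_sum_greatest) (auto intro: divisor_chain_dvd_Max)

lemma avoid_sum_divisor_chain_neq0:
  assumes "x > 0" "finite C" "divisor_chain C" "0 \<notin> C" "\<forall>c\<in>C. c dvd x \<and> c \<noteq> x"
  shows "avoid_sum x C \<noteq> 0"
proof (cases "C = {}")
  case True
  then show ?thesis
    using assms(1) by (simp add: avoid_sum_empty)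
next
  case False
  then have "Max C \<in> C"
    using assms(2) by simp
  then have "avoid_sum x C < 0"
    using assms by (intro avoid_sum_greatest_neg[of _ "Max C"]) (auto intro: divisor_chain_dvd_Max)
  then show ?thesis
    by simp
qed

fun gcd_chained :: "nat list \<Rightarrow> bool" where
  "gcd_chained [] \<longleftrightarrow> True"
| "gcd_chained (x # xs) \<longleftrightarrow>
     gcd_chained xs \<and> (\<forall>y\<in>set xs. \<not> x dvd y \<and> \<not> y dvd x) \<and> divisor_chain (gcd x ` set xs)"

lemma double_le_of_dvd_neq:
  fixes a b :: nat
  assumes "a dvd b" "a \<noteq> b" "b > 0"
  shows "2 * a \<le> b"
proof -
  obtain k where k: "b = a * k"
    using assms(1) by blast
  with assms(2,3) have "k \<noteq> 0" "k \<noteq> 1"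
    by auto
  then have "2 \<le> k"
    by linarith
  then show ?thesis
    using k by (metis mult.commute mult_le_mono2)
qed

lemma recip_add_recip_le_recip_gcd:
  fixes x y :: nat
  assumes "x > 0" "y > 0" "\<not> x dvd y" "\<not> y dvd x"
  shows "1 / of_nat x + 1 / of_nat y \<le> (1 / of_nat (gcd x y) :: rat)"
proof -
  let ?g = "gcd x y"
  have "?g \<noteq> x" "?g \<noteq> y"
    using assms(3,4) by (metis gcd_dvd2, metis gcd_dvd1)
  then have "2 * ?g \<le> x" "2 * ?g \<le> y"
    using assms(1,2) by (simp_all add: double_le_of_dvd_neq)
  then have "2 * of_nat ?g \<le> (of_nat x :: rat)" "2 * of_nat ?g \<le> (of_nat y :: rat)"
    by (metis of_nat_le_iff of_nat_mult of_nat_numeral)+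
  moreover have "(0 :: rat) < of_nat ?g"
    using assms(1) by simp
  ultimately have "1 / of_nat x \<le> 1 / (2 * of_nat ?g :: rat)" "1 / of_nat y \<le> 1 / (2 * of_nat ?g :: rat)"
    by (simp_all add: frac_le)
  then show ?thesis
    by simp
qed

lemma avoid_sum_gcd_chained_ge:
  assumes "z > 0" "\<forall>x\<in>set ys. x dvd z" "gcd_chained ys" "length ys \<ge> 2"
  shows "1 / of_nat z \<le> avoid_sum z (set ys)"
  using assms(2-4)
proof (induction ys)
  case Nil
  then show ?case by simp
next
  case (Cons x xs)
  have "x dvd z" "x > 0"
    using Cons.prems(1) assms(1) by (auto intro: Nat.gr0I)
  obtain y ys where xs: "xs = y # ys"
    using Cons.prems(3) by (cases xs) auto
  let ?C = "gcd x ` set xs"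
  have C: "finite ?C" "?C \<noteq> {}" "divisor_chain ?C" "0 \<notin> ?C" "\<forall>c\<in>?C. c dvd x"
    using Cons.prems(2) xs \<open>x > 0\<close> by auto
  obtain w where w: "w \<in> set xs" "Max ?C = gcd x w"
    using Max_in[OF C(1,2)] by auto
  have step: "avoid_sum z (set (x # xs)) =
      avoid_sum z (set xs) - 1 / of_nat x + 1 / of_nat (gcd x w)"
    using avoid_sum_insert[OF assms(1) \<open>x dvd z\<close>, of "set xs"]
      avoid_sum_divisor_chain[OF \<open>x > 0\<close> C] w(2) by simp
  show ?case
  proof (cases "ys = []")
    case True
    then have "w = y" "y dvd z" "y > 0" "\<not> x dvd y" "\<not> y dvd x"
      using w(1) xs Cons.prems(1,2) assms(1) by (auto intro: Nat.gr0I)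
    then have "1 / of_nat x + 1 / of_nat y \<le> (1 / of_nat (gcd x w) :: rat)"
      using recip_add_recip_le_recip_gcd \<open>x > 0\<close> by simp
    moreover have "avoid_sum z (set xs) = 1 / of_nat z - 1 / of_nat y"
      using avoid_sum_greatest[OF assms(1) \<open>y dvd z\<close>, of "{y}"] xs True by simp
    ultimately show ?thesis
      using step by simp
  next
    case False
    then have "length xs \<ge> 2"
      using xs by (cases ys) auto
    then have "1 / of_nat z \<le> avoid_sum z (set xs)"
      using Cons.IH Cons.prems(1,2) by simp
    moreover have "1 / of_nat x \<le> (1 / of_nat (gcd x w) :: rat)"
      using \<open>x > 0\<close> by (simp add: frac_le)
    ultimately show ?thesis
      using step by simp
  qed
qed

lemma gcd_chained_of_antichain:
  assumes "\<And>x y. x \<in> X \<Longrightarrow> y \<in> X \<Longrightarrow> x \<noteq> y \<Longrightarrow> \<not> x dvd y"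
    and "\<And>x y. x \<in> X \<Longrightarrow> y \<in> X \<Longrightarrow> x \<noteq> y \<Longrightarrow> gcd x y \<in> N"
    and "divisor_chain N" "distinct ys" "set ys \<subseteq> X"
  shows "gcd_chained ys"
  using assms(4,5)
proof (induction ys)
  case Nil
  then show ?case by simp
next
  case (Cons x xs)
  have "gcd x ` set xs \<subseteq> N"
    using Cons.prems assms(2) by auto
  then have "divisor_chain (gcd x ` set xs)"
    using assms(3) unfolding divisor_chain_def by blast
  with Cons assms(1) show ?case
    by auto
qed

lemma avoid_sum_antichain_ge:
  assumes "z > 0" "finite X" "card X \<ge> 2" "\<forall>x\<in>X. x dvd z"
    and "\<And>x y. x \<in> X \<Longrightarrow> y \<in> X \<Longrightarrow> x \<noteq> y \<Longrightarrow> \<not> x dvd y"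
    and "\<And>x y. x \<in> X \<Longrightarrow> y \<in> X \<Longrightarrow> x \<noteq> y \<Longrightarrow> gcd x y \<in> N" and "divisor_chain N"
  shows "1 / of_nat z \<le> avoid_sum z X"
proof -
  define ys where "ys = sorted_list_of_set X"
  have ys: "distinct ys" "set ys = X" "length ys = card X"
    using assms(2) unfolding ys_def by auto
  have "gcd_chained ys"
    using gcd_chained_of_antichain[OF assms(5-7) ys(1)] ys(2) by simp
  then show ?thesis
    using avoid_sum_gcd_chained_ge[OF assms(1), of ys] assms(3,4) ys by simp
qed

lemma avoid_sum_three_ge:
  assumes "z > 0" "a dvd z" "b dvd z" "c dvd z"
    and "\<not> a dvd b" "\<not> b dvd a" "\<not> a dvd c" "\<not> c dvd a" "\<not> b dvd c" "\<not> c dvd b"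
    and "gcd a b dvd c \<or> gcd a c dvd b \<or> gcd b c dvd a"
  shows "1 / of_nat z \<le> avoid_sum z {a, b, c}"
proof -
  have ordered: "1 / of_nat z \<le> avoid_sum z {x, y, w}"
    if "x dvd z" "y dvd z" "w dvd z" "\<not> x dvd y" "\<not> y dvd x" "\<not> x dvd w" "\<not> w dvd x"
      "\<not> y dvd w" "\<not> w dvd y" "gcd x y dvd w" for x y w
  proof -
    have "gcd y x dvd gcd y w"
      using that(10) by (simp add: gcd.commute)
    then have "gcd_chained [y, w, x]"
      using that(4-9) by (auto simp: divisor_chain_def)
    then show ?thesis
      using avoid_sum_gcd_chained_ge[OF assms(1), of "[y, w, x]"] that(1-3)
      by (simp add: insert_commute)
  qed
  from assms(11) show ?thesis
  proof (elim disjE)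
    assume "gcd a b dvd c"
    then show ?thesis
      using ordered[of a b c] assms(2-10) by simp
  next
    assume "gcd a c dvd b"
    then show ?thesis
      using ordered[of a c b] assms(2-10) by (simp add: insert_commute)
  next
    assume "gcd b c dvd a"
    then show ?thesis
      using ordered[of b c a] assms(2-10) by (simp add: insert_commute)
  qed
qed

definition dvd_maximals :: "nat set \<Rightarrow> nat set" where
  "dvd_maximals M = {x\<in>M. \<forall>y\<in>M. x dvd y \<longrightarrow> y = x}"

lemma dvd_maximals_antichain:
  "x \<in> dvd_maximals M \<Longrightarrow> y \<in> dvd_maximals M \<Longrightarrow> x \<noteq> y \<Longrightarrow> \<not> x dvd y"
  unfolding dvd_maximals_def by auto

lemma ex_dvd_maximals_dvd:
  assumes "finite M" "0 \<notin> M" "m \<in> M"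
  shows "\<exists>x\<in>dvd_maximals M. m dvd x"
proof -
  let ?U = "{y\<in>M. m dvd y}"
  have U: "finite ?U" "?U \<noteq> {}"
    using assms by auto
  then have "Max ?U \<in> ?U"
    by (rule Max_in)
  have "Max ?U \<in> dvd_maximals M"
    unfolding dvd_maximals_def
  proof (intro CollectI conjI ballI impI)
    fix y
    assume "y \<in> M" "Max ?U dvd y"
    then have "y \<in> ?U"
      using \<open>Max ?U \<in> ?U\<close> by (auto intro: dvd_trans)
    then have "y \<le> Max ?U"
      using U(1) by simp
    moreover have "Max ?U \<le> y"
      using \<open>Max ?U dvd y\<close> \<open>y \<in> M\<close> assms(2) by (auto intro: dvd_imp_le Nat.gr0I)
    ultimately show "y = Max ?U"
      by simp
  qed (use \<open>Max ?U \<in> ?U\<close> in simp)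
  then show ?thesis
    using \<open>Max ?U \<in> ?U\<close> by blast
qed

lemma avoid_sum_dvd_maximals:
  assumes "finite M" "0 \<notin> M"
  shows "avoid_sum z M = avoid_sum z (dvd_maximals M)"
proof (rule avoid_sum_cong)
  fix d
  have "dvd_maximals M \<subseteq> M"
    by (auto simp: dvd_maximals_def)
  then show "(\<exists>m\<in>M. d dvd m) \<longleftrightarrow> (\<exists>m\<in>dvd_maximals M. d dvd m)"
    using ex_dvd_maximals_dvd[OF assms] by (blast intro: dvd_trans)
qed

lemma gcd_in_non_maximals:
  assumes "gcd_closed M" "x \<in> M" "y \<in> M" "\<not> x dvd y"
  shows "gcd x y \<in> M - dvd_maximals M"
proof -
  have "gcd x y \<noteq> x"
    using assms(4) by (metis gcd_dvd2)
  then show ?thesis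
    using assms(1-3) unfolding gcd_closed_def dvd_maximals_def by auto
qed

lemma divisor_chain_non_maximals:
  assumes "finite M" "gcd_closed M" "card (M - dvd_maximals M) \<le> 2"
  shows "divisor_chain (M - dvd_maximals M)"
  unfolding divisor_chain_def
proof (intro ballI)
  fix p q
  assume pq: "p \<in> M - dvd_maximals M" "q \<in> M - dvd_maximals M"
  show "p dvd q \<or> q dvd p"
  proof (rule ccontr)
    assume incomparable: "\<not> (p dvd q \<or> q dvd p)"
    then have "gcd p q \<in> M - dvd_maximals M"
      using pq gcd_in_non_maximals[OF assms(2)] by blast
    moreover have "p \<noteq> q" "gcd p q \<noteq> p" "gcd p q \<noteq> q"
      using incomparable by (metis dvd_refl, metis gcd_dvd2, metis gcd_dvd1)
    ultimately have "{p, q, gcd p q} \<subseteq> M - dvd_maximals M" "card {p, q, gcd p q} = 3"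
      using pq by auto
    then have "3 \<le> card (M - dvd_maximals M)"
      using assms(1) by (metis card_mono finite_Diff)
    with assms(3) show False
      by simp
  qed
qed

lemma card_gcds_of_three:
  fixes a b c :: nat
  assumes "\<not> gcd a b dvd c" "\<not> gcd a c dvd b" "\<not> gcd b c dvd a"
  shows "card {gcd a b, gcd a c, gcd b c, gcd (gcd a b) c} = 4"
proof -
  let ?h = "gcd (gcd a b) c"
  have h: "?h dvd a" "?h dvd b" "?h dvd c"
    by (meson dvd_trans gcd_dvd1 gcd_dvd2)+
  have "gcd a b \<noteq> gcd a c" "gcd a b \<noteq> gcd b c" "gcd a c \<noteq> gcd b c"
    using assms by (metis gcd_dvd2, metis gcd_dvd2, metis gcd_dvd1)
  moreover have "?h \<noteq> gcd a b" "?h \<noteq> gcd a c" "?h \<noteq> gcd b c"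
    using assms h by metis+
  ultimately show ?thesis
    by simp
qed

lemma three_dvd_maximals_gcd_dvd:
  assumes "finite M" "gcd_closed M" "card (M - dvd_maximals M) \<le> 3"
    and "a \<in> dvd_maximals M" "b \<in> dvd_maximals M" "c \<in> dvd_maximals M"
    and "a \<noteq> b" "a \<noteq> c" "b \<noteq> c"
  shows "gcd a b dvd c \<or> gcd a c dvd b \<or> gcd b c dvd a"
proof (rule ccontr)
  assume none: "\<not> ?thesis"
  have in_M: "a \<in> M" "b \<in> M" "c \<in> M" "gcd a b \<in> M"
    using assms(2,4-6) by (auto simp: dvd_maximals_def gcd_closed_def)
  have incomparable: "\<not> a dvd b" "\<not> a dvd c" "\<not> b dvd c" "\<not> c dvd gcd a b"
    using assms(4-9) by (auto simp: dvd_maximals_def intro: dvd_trans)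
  have "gcd a b \<in> M - dvd_maximals M" "gcd a c \<in> M - dvd_maximals M"
    "gcd b c \<in> M - dvd_maximals M" "gcd c (gcd a b) \<in> M - dvd_maximals M"
    using in_M incomparable gcd_in_non_maximals[OF assms(2)] by metis+
  then have "{gcd a b, gcd a c, gcd b c, gcd c (gcd a b)} \<subseteq> M - dvd_maximals M"
    by blast
  then have "card {gcd a b, gcd a c, gcd b c, gcd (gcd a b) c} \<le> card (M - dvd_maximals M)"
    using assms(1) by (intro card_mono) (auto simp: gcd.commute[of c])
  with card_gcds_of_three none assms(3) show False
    by simp
qed

lemma avoid_sum_dvd_maximals_ge:
  assumes "z > 0" "finite M" "gcd_closed M" "\<forall>m\<in>M. m dvd z" "card M \<le> 6"
    and "card (dvd_maximals M) \<ge> 2"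
  shows "1 / of_nat z \<le> avoid_sum z (dvd_maximals M)"
proof -
  define X where "X = dvd_maximals M"
  have "X \<subseteq> M" "finite X"
    using assms(2) unfolding X_def dvd_maximals_def by auto
  then have card_split: "card M = card X + card (M - X)"
    using assms(2) by (metis card_Diff_subset card_mono le_add_diff_inverse)
  have X_div: "\<forall>x\<in>X. x dvd z"
    using \<open>X \<subseteq> M\<close> assms(4) by auto
  have antichain: "\<And>x y. x \<in> X \<Longrightarrow> y \<in> X \<Longrightarrow> x \<noteq> y \<Longrightarrow> \<not> x dvd y"
    unfolding X_def by (rule dvd_maximals_antichain)
  consider "card X = 2" | "card X = 3" | "card X \<ge> 4"
    using assms(6) unfolding X_def by linarith
  then have "1 / of_nat z \<le> avoid_sum z X"
  proof cases
    case 1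
    then obtain a b where "X = {a, b}" "a \<noteq> b"
      by (meson card_2_iff)
    then show ?thesis
      using assms(1) X_div antichain \<open>finite X\<close> 1
      by (intro avoid_sum_antichain_ge[where N = "{gcd a b}"]) (auto simp: divisor_chain_def gcd.commute)
  next
    case 2
    then obtain a b c where abc: "X = {a, b, c}" "a \<noteq> b" "a \<noteq> c" "b \<noteq> c"
      by (meson card_3_iff)
    then have "gcd a b dvd c \<or> gcd a c dvd b \<or> gcd b c dvd a"
      using assms(2,3,5) card_split unfolding X_def by (intro three_dvd_maximals_gcd_dvd) auto
    moreover have "\<not> a dvd b" "\<not> b dvd a" "\<not> a dvd c" "\<not> c dvd a" "\<not> b dvd c" "\<not> c dvd b"
      using antichain abc by auto
    moreover have "a dvd z" "b dvd z" "c dvd z"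
      using X_div abc(1) by auto
    ultimately show ?thesis
      unfolding abc(1) using avoid_sum_three_ge[OF assms(1)] by blast
  next
    case 3
    have "gcd x y \<in> M - X" if "x \<in> X" "y \<in> X" "x \<noteq> y" for x y
      using that antichain \<open>X \<subseteq> M\<close> gcd_in_non_maximals[OF assms(3)] unfolding X_def by blast
    moreover from 3 have "divisor_chain (M - X)"
      using assms(2,3,5) card_split unfolding X_def by (intro divisor_chain_non_maximals) auto
    ultimately show ?thesis
      using assms(1) \<open>finite X\<close> 3 X_div antichain
      by (intro avoid_sum_antichain_ge[where N = "M - X"]) auto
  qed
  then show ?thesis
    unfolding X_def .
qed

lemma avoid_sum_small_gcd_closed_neq0:
  assumes "z > 0" "finite M" "gcd_closed M" "\<forall>m\<in>M. m dvd z \<and> m \<noteq> z" "card M \<le> 6"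
  shows "avoid_sum z M \<noteq> 0"
proof -
  have "0 \<notin> M"
    using assms(1,4) by auto
  with assms(2) have avoid_maximals: "avoid_sum z M = avoid_sum z (dvd_maximals M)"
    by (rule avoid_sum_dvd_maximals)
  have "finite (dvd_maximals M)" "dvd_maximals M \<subseteq> M"
    using assms(2) by (auto simp: dvd_maximals_def)
  consider "card (dvd_maximals M) = 0" | "card (dvd_maximals M) = 1" | "card (dvd_maximals M) \<ge> 2"
    by linarith
  then show ?thesis
  proof cases
    case 1
    then have "dvd_maximals M = {}"
      using \<open>finite (dvd_maximals M)\<close> by simp
    then show ?thesis
      using avoid_maximals assms(1) by (simp add: avoid_sum_empty)
  next
    case 2
    then obtain e where "dvd_maximals M = {e}"
      by (meson card_1_singletonE)
    then have "avoid_sum z (dvd_maximals M) < 0"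
      using \<open>dvd_maximals M \<subseteq> M\<close> assms(1,4) by (intro avoid_sum_greatest_neg[of z e]) auto
    then show ?thesis
      using avoid_maximals by simp
  next
    case 3
    then have "1 / of_nat z \<le> avoid_sum z (dvd_maximals M)"
      using assms by (intro avoid_sum_dvd_maximals_ge) auto
    moreover have "(0 :: rat) < 1 / of_nat z"
      using assms(1) by simp
    ultimately show ?thesis
      using avoid_maximals by linarith
  qed
qed

lemma eq_0_of_sum_divisors_in_eq_0:
  fixes f :: "nat \<Rightarrow> 'a::comm_monoid_add"
  assumes "finite T" "\<And>x. x \<in> T \<Longrightarrow> x > 0"
    and "\<And>x. x \<in> T \<Longrightarrow> (\<Sum>z\<in>{z\<in>T. z dvd x}. f z) = 0" and "x \<in> T"
  shows "f x = 0"
  using assms(4)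
proof (induction x rule: less_induct)
  case (less x)
  have "{z\<in>T. z dvd x} = insert x {z\<in>T. z dvd x \<and> z \<noteq> x}"
    using less.prems by auto
  moreover have "f z = 0" if "z \<in> T" "z dvd x" "z \<noteq> x" for z
    using that less assms(2) by (metis dvd_imp_le le_neq_implies_less)
  ultimately have "(\<Sum>z\<in>{z\<in>T. z dvd x}. f z) = f x"
    using assms(1) by simp
  then show ?case
    using assms(3) less.prems by simp
qed

lemma eq_0_of_sum_multiples_in_eq_0:
  fixes f :: "nat \<Rightarrow> 'a::comm_monoid_add"
  assumes "finite T" "\<And>x. x \<in> T \<Longrightarrow> x > 0"
    and "\<And>x. x \<in> T \<Longrightarrow> (\<Sum>y\<in>{y\<in>T. x dvd y}. f y) = 0" and "x \<in> T"
  shows "f x = 0"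
proof (rule ccontr)
  assume "f x \<noteq> 0"
  define U where "U = {x\<in>T. f x \<noteq> 0}"
  define u where "u = Max U"
  have "finite U" "U \<noteq> {}"
    using assms(1,4) \<open>f x \<noteq> 0\<close> unfolding U_def by auto
  then have U: "finite U" "u \<in> U" "\<And>y. y \<in> U \<Longrightarrow> y \<le> u"
    unfolding u_def by auto
  have "{y\<in>T. u dvd y} = insert u {y\<in>T. u dvd y \<and> y \<noteq> u}"
    using U(2) unfolding U_def by auto
  moreover have "f y = 0" if "y \<in> T" "u dvd y" "y \<noteq> u" for y
    using that U(3)[of y] assms(2)[of y] dvd_imp_le[of u y] unfolding U_def by fastforce
  ultimately have "(\<Sum>y\<in>{y\<in>T. u dvd y}. f y) = f u"
    using assms(1) by simp
  then show False
    using assms(3) U(2) unfolding U_def by simp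
qed

definition proper_divisors_in :: "nat set \<Rightarrow> nat \<Rightarrow> nat set" where
  "proper_divisors_in T z = {w\<in>T. w dvd z \<and> w \<noteq> z}"

context
  fixes T :: "nat set"
  assumes finite_T: "finite T" and pos_T: "\<And>x. x \<in> T \<Longrightarrow> x > 0" and closed_T: "gcd_closed T"
begin

lemma avoiding_divisors_dvd_iff:
  assumes "z \<in> T" "y \<in> T" "d \<in> avoiding_divisors z (proper_divisors_in T z)"
  shows "d dvd y \<longleftrightarrow> z dvd y"
proof
  assume "d dvd y"
  moreover have "d dvd z" "gcd z y \<in> T"
    using assms closed_T by (auto simp: avoiding_divisors_def gcd_closed_def)
  ultimately have "gcd z y = z"
    using assms(3) by (auto simp: avoiding_divisors_def proper_divisors_in_def)
  then show "z dvd y"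
    by (metis gcd_dvd2)
next
  assume "z dvd y"
  then show "d dvd y"
    using assms(3) by (auto simp: avoiding_divisors_def intro: dvd_trans)
qed

lemma avoiding_divisors_disjoint:
  assumes "z\<^sub>1 \<in> T" "z\<^sub>2 \<in> T" "z\<^sub>1 \<noteq> z\<^sub>2"
  shows "avoiding_divisors z\<^sub>1 (proper_divisors_in T z\<^sub>1) \<inter>
    avoiding_divisors z\<^sub>2 (proper_divisors_in T z\<^sub>2) = {}"
proof (rule ccontr)
  assume "\<not> ?thesis"
  then obtain d where d\<^sub>1: "d \<in> avoiding_divisors z\<^sub>1 (proper_divisors_in T z\<^sub>1)"
    and d\<^sub>2: "d \<in> avoiding_divisors z\<^sub>2 (proper_divisors_in T z\<^sub>2)"
    by blast
  then have "d dvd z\<^sub>1" "d dvd z\<^sub>2"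
    by (simp_all add: avoiding_divisors_def)
  then have "z\<^sub>1 dvd z\<^sub>2" "z\<^sub>2 dvd z\<^sub>1"
    using avoiding_divisors_dvd_iff[OF assms(1,2) d\<^sub>1] avoiding_divisors_dvd_iff[OF assms(2,1) d\<^sub>2]
    by simp_all
  with assms(3) show False
    by (simp add: dvd_antisym)
qed

lemma divisors_eq_UN_avoiding_divisors:
  assumes "x \<in> T"
  shows "{d. d dvd x} = (\<Union>z\<in>{z\<in>T. z dvd x}. avoiding_divisors z (proper_divisors_in T z))"
proof (intro equalityI subsetI)
  fix d
  assume "d \<in> {d. d dvd x}"
  define U where "U = {z\<in>T. d dvd z \<and> z dvd x}"
  have "finite U" "x \<in> U"
    using finite_T assms \<open>d \<in> {d. d dvd x}\<close> unfolding U_def by auto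
  then have U: "finite U" "Min U \<in> U" "\<And>w. w \<in> U \<Longrightarrow> Min U \<le> w"
    by (auto intro: Min_in)
  have "d \<in> avoiding_divisors (Min U) (proper_divisors_in T (Min U))"
    unfolding avoiding_divisors_def
  proof (intro CollectI conjI ballI notI)
    show "d dvd Min U"
      using U(2) unfolding U_def by simp
    fix w
    assume "w \<in> proper_divisors_in T (Min U)" "d dvd w"
    then have "w \<in> U" "w \<le> Min U" "w \<noteq> Min U"
      using U(2) pos_T unfolding U_def proper_divisors_in_def by (auto intro: dvd_trans dvd_imp_le)
    then show False
      using U(3) by fastforce
  qed
  then show "d \<in> (\<Union>z\<in>{z\<in>T. z dvd x}. avoiding_divisors z (proper_divisors_in T z))"
    using U(2) unfolding U_def by blast
qed (auto simp: avoiding_divisors_def intro: dvd_trans)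

lemma sum_recip_gcd_eq:
  fixes c :: "nat \<Rightarrow> rat"
  assumes "x \<in> T"
  shows "(\<Sum>y\<in>T. c y / of_nat (gcd x y)) =
    (\<Sum>z\<in>{z\<in>T. z dvd x}. avoid_sum z (proper_divisors_in T z) * (\<Sum>y\<in>{y\<in>T. z dvd y}. c y))"
proof -
  let ?A = "\<lambda>z. avoiding_divisors z (proper_divisors_in T z)"
  let ?m = "\<lambda>d. \<Sum>y\<in>{y\<in>T. d dvd y}. c y"
  have "x > 0"
    using pos_T assms by simp
  have "(\<Sum>y\<in>T. c y / of_nat (gcd x y)) =
      (\<Sum>y\<in>T. \<Sum>d\<in>{d\<in>{d. d dvd x}. d dvd y}. c y * moebius_recip d)"
  proof (rule sum.cong[OF refl])
    fix y
    have common: "{d\<in>{d. d dvd x}. d dvd y} = {d. d dvd gcd x y}"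
      by auto
    have "(\<Sum>d\<in>{d. d dvd gcd x y}. moebius_recip d) = 1 / of_nat (gcd x y)"
      using \<open>x > 0\<close> by (intro sum_divisors_moebius_recip) simp
    then show "c y / of_nat (gcd x y) = (\<Sum>d\<in>{d\<in>{d. d dvd x}. d dvd y}. c y * moebius_recip d)"
      unfolding common sum_distrib_left[symmetric] by simp
  qed
  also have "\<dots> = (\<Sum>d\<in>{d. d dvd x}. \<Sum>y\<in>{y\<in>T. d dvd y}. c y * moebius_recip d)"
    using finite_T \<open>x > 0\<close> by (intro sum.swap_restrict) auto
  also have "\<dots> = (\<Sum>d\<in>{d. d dvd x}. moebius_recip d * ?m d)"
    by (simp add: sum_distrib_left mult.commute)
  also have "\<dots> = (\<Sum>z\<in>{z\<in>T. z dvd x}. \<Sum>d\<in>?A z. moebius_recip d * ?m d)"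
    unfolding divisors_eq_UN_avoiding_divisors[OF assms] using finite_T pos_T
    by (intro sum.UNION_disjoint) (auto simp: finite_avoiding_divisors avoiding_divisors_disjoint)
  also have "\<dots> = (\<Sum>z\<in>{z\<in>T. z dvd x}. \<Sum>d\<in>?A z. moebius_recip d * ?m z)"
    using avoiding_divisors_dvd_iff by (intro sum.cong refl) (metis (no_types, lifting) mem_Collect_eq)
  also have "\<dots> = (\<Sum>z\<in>{z\<in>T. z dvd x}. avoid_sum z (proper_divisors_in T z) * ?m z)"
    by (simp add: avoid_sum_def sum_distrib_right)
  finally show ?thesis .
qed

lemma recip_gcd_system_trivial:
  fixes c :: "nat \<Rightarrow> rat"
  assumes "\<And>z. z \<in> T \<Longrightarrow> avoid_sum z (proper_divisors_in T z) \<noteq> 0"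
    and "\<And>x. x \<in> T \<Longrightarrow> (\<Sum>y\<in>T. c y / of_nat (gcd x y)) = 0" and "y \<in> T"
  shows "c y = 0"
proof -
  let ?a = "\<lambda>z. avoid_sum z (proper_divisors_in T z) * (\<Sum>y\<in>{y\<in>T. z dvd y}. c y)"
  have "(\<Sum>z\<in>{z\<in>T. z dvd x}. ?a z) = 0" if "x \<in> T" for x
    using sum_recip_gcd_eq[OF that, of c] assms(2)[OF that] by simp
  then have "?a z = 0" if "z \<in> T" for z
    using eq_0_of_sum_divisors_in_eq_0[OF finite_T pos_T, where f = ?a] that by blast
  then have "(\<Sum>y\<in>{y\<in>T. z dvd y}. c y) = 0" if "z \<in> T" for z
    using assms(1) that by simp
  then show ?thesis
    using eq_0_of_sum_multiples_in_eq_0[OF finite_T pos_T, where f = c] assms(3) by blast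
qed

end

lemma gcd_closed_Min_dvd:
  assumes "finite S" "gcd_closed S" "0 \<notin> S" "s \<in> S"
  shows "Min S dvd s"
proof -
  have "Min S \<in> S"
    using assms(1,4) by (auto intro: Min_in)
  then have "gcd (Min S) s \<in> S" "0 < Min S"
    using assms(2-4) unfolding gcd_closed_def by (auto intro: Nat.gr0I)
  then have "Min S \<le> gcd (Min S) s" "gcd (Min S) s \<le> Min S"
    using assms(1) by simp_all
  then show ?thesis
    by (metis gcd_dvd2 le_antisym)
qed

lemma gcd_closed_proper_divisors_in:
  assumes "gcd_closed S"
  shows "gcd_closed (proper_divisors_in S z)"
  unfolding gcd_closed_def
proof (intro ballI)
  fix a b
  assume "a \<in> proper_divisors_in S z" "b \<in> proper_divisors_in S z"
  then have "a \<in> S" "b \<in> S" "a dvd z" "a \<noteq> z"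
    by (auto simp: proper_divisors_in_def)
  then have "gcd a b \<in> S" "gcd a b dvd z" "gcd a b \<noteq> z"
    using assms unfolding gcd_closed_def by (auto intro: dvd_trans)
  then show "gcd a b \<in> proper_divisors_in S z"
    by (simp add: proper_divisors_in_def)
qed

context
  fixes R S :: "nat set"
  assumes finite_R: "finite R" and chain_R: "divisor_chain R"
    and finite_S: "finite S" and closed_S: "gcd_closed S"
    and pos: "0 \<notin> R \<union> S" and below: "Max R dvd Min S"
begin

lemma chain_dvd_gcd_closed: "r \<in> R \<Longrightarrow> s \<in> S \<Longrightarrow> r dvd s"
  using finite_R chain_R pos below divisor_chain_dvd_Max gcd_closed_Min_dvd[OF finite_S closed_S]
  by (meson UnCI dvd_trans)

lemma gcd_closed_chain_union: "gcd_closed (R \<union> S)"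
  unfolding gcd_closed_def
proof (intro ballI)
  fix x y
  assume "x \<in> R \<union> S" "y \<in> R \<union> S"
  then consider "x \<in> R" "y \<in> R" | "x \<in> R" "y \<in> S" | "x \<in> S" "y \<in> R" | "x \<in> S" "y \<in> S"
    by blast
  then show "gcd x y \<in> R \<union> S"
  proof cases
    case 1
    then have "x dvd y \<or> y dvd x"
      using chain_R unfolding divisor_chain_def by blast
    then show ?thesis
      using 1 by (auto simp: gcd_nat.absorb1 gcd_nat.absorb2)
  next
    case 2
    then show ?thesis
      using chain_dvd_gcd_closed by (simp add: gcd_nat.absorb1)
  next
    case 3
    then show ?thesis
      using chain_dvd_gcd_closed by (simp add: gcd_nat.absorb2)
  next
    case 4
    then show ?thesis
      using closed_S unfolding gcd_closed_def by blast
  qed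
qed

lemma proper_divisors_in_chain:
  assumes "\<forall>s\<in>S. z dvd s"
  shows "proper_divisors_in (R \<union> S) z \<subseteq> R"
  using assms by (auto simp: proper_divisors_in_def dest: dvd_antisym)

lemma avoid_sum_proper_divisors_in_union:
  assumes "Min S \<in> proper_divisors_in S z"
  shows "avoid_sum z (proper_divisors_in (R \<union> S) z) = avoid_sum z (proper_divisors_in S z)"
proof (rule avoid_sum_cong)
  fix d
  show "(\<exists>m\<in>proper_divisors_in (R \<union> S) z. d dvd m) \<longleftrightarrow> (\<exists>m\<in>proper_divisors_in S z. d dvd m)"
  proof
    assume "\<exists>m\<in>proper_divisors_in (R \<union> S) z. d dvd m"
    then obtain m where m: "m \<in> proper_divisors_in (R \<union> S) z" "d dvd m"
      by blast
    show "\<exists>m\<in>proper_divisors_in S z. d dvd m"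
    proof (cases "m \<in> R")
      case True
      have "Min S \<in> S"
        using assms by (simp add: proper_divisors_in_def)
      with True have "d dvd Min S"
        using m(2) chain_dvd_gcd_closed dvd_trans by blast
      then show ?thesis
        using assms by blast
    next
      case False
      then have "m \<in> proper_divisors_in S z"
        using m(1) by (simp add: proper_divisors_in_def)
      then show ?thesis
        using m(2) by blast
    qed
  qed (auto simp: proper_divisors_in_def)
qed

lemma avoid_sum_chain_union_neq0:
  assumes "card S \<le> 7" "z \<in> R \<union> S"
  shows "avoid_sum z (proper_divisors_in (R \<union> S) z) \<noteq> 0"
proof -
  have "z > 0"
    using assms(2) pos by (auto intro: Nat.gr0I)
  consider "\<forall>s\<in>S. z dvd s" | "z \<in> S" "z \<noteq> Min S"
    using assms(2) chain_dvd_gcd_closed gcd_closed_Min_dvd[OF finite_S closed_S] pos by blast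
  then show ?thesis
  proof cases
    case 1
    have "divisor_chain (proper_divisors_in (R \<union> S) z)"
      using proper_divisors_in_chain[OF 1] chain_R unfolding divisor_chain_def by blast
    then show ?thesis
      using \<open>z > 0\<close> finite_R finite_S pos
      by (intro avoid_sum_divisor_chain_neq0) (auto simp: proper_divisors_in_def)
  next
    case 2
    let ?Q = "proper_divisors_in S z"
    have "Min S \<in> S"
      using 2 finite_S by (auto intro: Min_in)
    then have "Min S \<in> ?Q"
      using 2 finite_S closed_S pos by (auto simp: proper_divisors_in_def intro: gcd_closed_Min_dvd)
    then have same: "avoid_sum z (proper_divisors_in (R \<union> S) z) = avoid_sum z ?Q"
      by (rule avoid_sum_proper_divisors_in_union)
    have "gcd_closed ?Q"
      using closed_S by (rule gcd_closed_proper_divisors_in)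
    moreover have "card ?Q \<le> 6"
    proof -
      have "card ?Q \<le> card (S - {z})"
        using finite_S by (intro card_mono) (auto simp: proper_divisors_in_def)
      then show ?thesis
        using assms(1) 2 by simp
    qed
    ultimately have "avoid_sum z ?Q \<noteq> 0"
      using \<open>z > 0\<close> finite_S
      by (intro avoid_sum_small_gcd_closed_neq0) (auto simp: proper_divisors_in_def)
    with same show ?thesis
      by simp
  qed
qed

end

lemma lcm_matrix_mult_vec_nth:
  fixes xs :: "nat list"
  assumes "v \<in> carrier_vec (length xs)" "i < length xs" "xs ! i > 0"
  shows "of_int ((lcm_matrix xs *\<^sub>v v) $ i) =
    (of_nat (xs ! i) :: rat) *
      (\<Sum>j<length xs. of_int (v $ j) * of_nat (xs ! j) / of_nat (gcd (xs ! i) (xs ! j)))"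
proof -
  have lcm: "of_nat (lcm x y) = (of_nat x * of_nat y / of_nat (gcd x y) :: rat)" if "x > 0" for x y :: nat
  proof -
    have "of_nat (gcd x y) * of_nat (lcm x y) = (of_nat (x * y) :: rat)"
      by (metis of_nat_mult prod_gcd_lcm_nat)
    then show ?thesis
      using that by (simp add: field_simps)
  qed
  have "(lcm_matrix xs *\<^sub>v v) $ i = (\<Sum>j<length xs. int (lcm (xs ! i) (xs ! j)) * v $ j)"
    using assms(1,2) by (simp add: lcm_matrix_def scalar_prod_def atLeast0LessThan)
  then show ?thesis
    using assms(3) by (simp add: lcm sum_distrib_left algebra_simps)
qed

lemma det_lcm_matrix_neq0:
  fixes xs :: "nat list"
  assumes "distinct xs" "\<forall>x\<in>set xs. x > 0"
    and trivial: "\<And>c :: nat \<Rightarrow> rat.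
      (\<And>x. x \<in> set xs \<Longrightarrow> (\<Sum>y\<in>set xs. c y / of_nat (gcd x y)) = 0) \<Longrightarrow>
      (\<And>y. y \<in> set xs \<Longrightarrow> c y = 0)"
  shows "det (lcm_matrix xs) \<noteq> 0"
proof
  let ?n = "length xs"
  assume "det (lcm_matrix xs) = 0"
  then obtain v where v: "v \<in> carrier_vec ?n" "v \<noteq> 0\<^sub>v ?n" "lcm_matrix xs *\<^sub>v v = 0\<^sub>v ?n"
    using det_0_iff_vec_prod_zero[of "lcm_matrix xs" ?n] by (auto simp: lcm_matrix_def)
  have inj: "inj_on (nth xs) {..<?n}"
    using assms(1) by (intro inj_on_nth) auto
  have set_xs: "set xs = nth xs ` {..<?n}"
    by (auto simp: in_set_conv_nth)
  \<comment> \<open>With c y = y * v_y, row x of [S] v = 0 reads x * (\<Sum>y. c y / gcd x y) = 0.\<close>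
  define c where "c y = of_int (v $ the_inv_into {..<?n} (nth xs) y) * (of_nat y :: rat)" for y
  have c: "c (xs ! j) = of_int (v $ j) * of_nat (xs ! j)" if "j < ?n" for j
    using the_inv_into_f_f[OF inj] that unfolding c_def by simp
  have "(\<Sum>y\<in>set xs. c y / of_nat (gcd x y)) = 0" if x: "x \<in> set xs" for x
  proof -
    obtain i where i: "i < ?n" "x = xs ! i"
      using x by (metis in_set_conv_nth)
    have "of_nat x * (\<Sum>y\<in>set xs. c y / of_nat (gcd x y)) = of_int ((lcm_matrix xs *\<^sub>v v) $ i)"
      using lcm_matrix_mult_vec_nth[OF v(1) i(1)] i assms(2) c
      by (simp add: set_xs sum.reindex[OF inj])
    also have "\<dots> = 0"
      using v(3) i(1) by simp
    finally show ?thesis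
      using x assms(2) by (metis mult_eq_0_iff of_nat_eq_0_iff not_less0)
  qed
  then have c_0: "c y = 0" if "y \<in> set xs" for y
    using trivial that by blast
  have "v $ j = 0" if "j < ?n" for j
  proof -
    have "xs ! j \<in> set xs"
      using that by simp
    then have "c (xs ! j) = 0" "xs ! j > 0"
      using c_0 assms(2) by auto
    then show ?thesis
      using c[OF that] by simp
  qed
  then have "v = 0\<^sub>v ?n"
    using v(1) by (intro eq_vecI) auto
  with v(2) show False
    by simp
qed

theorem corollary4p5:
  fixes xs :: "nat list" and n :: nat
  assumes "length xs = n" and "n \<ge> 8"
    and "distinct xs" and "\<forall>x\<in>set xs. x > 0"
    and "r_fold_gcd_closed (n - 7) (set xs)"
  shows "det (lcm_matrix xs) \<noteq> 0"
proof -
  obtain R where R: "R \<subseteq> set xs" "divisor_chain R" "card R = n - 7"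
    "Max R dvd Min (set xs - R)" "gcd_closed (set xs - R)"
    using assms(5) unfolding r_fold_gcd_closed_def by blast
  define S where "S = set xs - R"
  have T: "set xs = R \<union> S"
    using R(1) unfolding S_def by blast
  have "finite R"
    using R(1) finite_subset by blast
  then have "card S = 7"
    using R(1,3) assms(1-3) unfolding S_def by (simp add: card_Diff_subset distinct_card)
  have "0 \<notin> R \<union> S"
    using R(1) assms(4) T by blast
  then have facts: "finite R" "divisor_chain R" "finite S" "gcd_closed S" "0 \<notin> R \<union> S" "Max R dvd Min S"
    using \<open>finite R\<close> R(2,4,5) unfolding S_def by simp_all
  show ?thesis
  proof (rule det_lcm_matrix_neq0[OF assms(3,4)])
    fix c :: "nat \<Rightarrow> rat" and y
    assume "\<And>x. x \<in> set xs \<Longrightarrow> (\<Sum>y\<in>set xs. c y / of_nat (gcd x y)) = 0" "y \<in> set xs"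
    then show "c y = 0"
      unfolding T
      by (intro recip_gcd_system_trivial[of "R \<union> S" c y] gcd_closed_chain_union[OF facts]
          avoid_sum_chain_union_neq0[OF facts])
        (use facts(1,3,5) \<open>card S = 7\<close> in \<open>auto intro: Nat.gr0I\<close>)
  qed
qed

end
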